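(* Let $g$ be a Möbius transformation of the Riemann sphere with $g(\overline{\mathbb D_1})\subset\mathbb D_1$. Then $g^\top(\overline{\mathbb D_1})\subset\mathbb D_1$.
   Context: $\mathbb D_t=\{z\in\mathbb C:|z|<t\}$. For a Möbius transformation $g(x)=\frac{ax+b}{cx+d}$ ($ad-bc\ne0$), its "transpose" is the Möbius transformation $g^\top(x)=\frac{ax+c}{bx+d}$. *)

theory Defs
  imports "HOL-Analysis.Analysis"
begin

text \<open>The Moebius map g(z) = (a z + b)/(c z + d) (with a d - b c \<noteq> 0) acting on the Riemann
  sphere maps the closed unit disk into the open unit disk iff no point of the closed disk
  is sent to \<infinity> (i.e. c z + d \<noteq> 0 there) and the finite image lies in the open disk.
  (Points z = \<infinity> are not in the closed disk.)\<close>
definition moebius_maps_cdisc_into_disc :: "complex \<Rightarrow> complex \<Rightarrow> complex \<Rightarrow> complex \<Rightarrow> bool" where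
  "moebius_maps_cdisc_into_disc a b c d \<longleftrightarrow>
     (\<forall>z\<in>cball 0 1. c * z + d \<noteq> 0 \<and> moebius a b c d z \<in> ball 0 1)"

end

theory Submission
  imports Defs
begin

text \<open>If \<open>g\<^sup>\<top>\<close> failed at some \<open>z\<close> of the closed disc, i.e. \<open>\<bar>b z + d\<bar> \<le> \<bar>a z + c\<bar>\<close>, then
  \<open>u = -(b z + d)/(a z + c)\<close> also lies in the closed disc, and \<open>a u + b\<close>, \<open>c u + d\<close> are
  \<open>-\<Delta>/(a z + c)\<close> and \<open>\<Delta> z/(a z + c)\<close> with \<open>\<Delta> = a d - b c\<close>. Hence \<open>\<bar>c u + d\<bar> \<le> \<bar>a u + b\<bar>\<close>,
  so \<open>g\<close> fails at \<open>u\<close>.\<close>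

lemma moebius_maps_cdisc_into_disc_iff:
  "moebius_maps_cdisc_into_disc a b c d \<longleftrightarrow>
     (\<forall>z. cmod z \<le> 1 \<longrightarrow> cmod (a * z + b) < cmod (c * z + d))"
proof -
  have "c * z + d \<noteq> 0 \<and> cmod (moebius a b c d z) < 1 \<longleftrightarrow> cmod (a * z + b) < cmod (c * z + d)"
    for z
    by (cases "c * z + d = 0") (auto simp: moebius_def norm_divide divide_less_eq)
  then show ?thesis
    by (simp add: moebius_maps_cdisc_into_disc_def Ball_def)
qed

lemma moebius_transpose_witness_eqs:
  fixes a b c d u z :: "'a :: comm_ring_1"
  assumes "(a * z + c) * u = - (b * z + d)"
  shows "(a * u + b) * (a * z + c) = - (a * d - b * c)"
    and "(c * u + d) * (a * z + c) = (a * d - b * c) * z"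
proof -
  have "(a * u + b) * (a * z + c) = a * ((a * z + c) * u) + b * (a * z + c)"
    by (simp add: algebra_simps)
  also have "\<dots> = - (a * d - b * c)"
    unfolding assms by (simp add: algebra_simps)
  finally show "(a * u + b) * (a * z + c) = - (a * d - b * c)" .
  have "(c * u + d) * (a * z + c) = c * ((a * z + c) * u) + d * (a * z + c)"
    by (simp add: algebra_simps)
  also have "\<dots> = (a * d - b * c) * z"
    unfolding assms by (simp add: algebra_simps)
  finally show "(c * u + d) * (a * z + c) = (a * d - b * c) * z" .
qed

lemma moebius_transpose_failure_transfers:
  fixes a b c d z :: complex
  assumes det: "a * d - b * c \<noteq> 0"
    and z: "cmod z \<le> 1"
    and fails: "cmod (b * z + d) \<le> cmod (a * z + c)"
  obtains u where "cmod u \<le> 1" and "cmod (c * u + d) \<le> cmod (a * u + b)"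
proof
  have "a * d - b * c = a * (b * z + d) - b * (a * z + c)"
    by (simp add: algebra_simps)
  with det fails have nz: "a * z + c \<noteq> 0"
    by auto
  define u where "u = - (b * z + d) / (a * z + c)"
  have "(a * z + c) * u = - (b * z + d)"
    using nz by (simp add: u_def)
  note eqs = moebius_transpose_witness_eqs[OF this]
  show "cmod u \<le> 1"
    using nz fails by (simp only: u_def norm_divide norm_minus_cancel divide_le_eq_1) simp
  have "cmod (c * u + d) * cmod (a * z + c) = cmod (a * d - b * c) * cmod z"
    using eqs(2) by (metis norm_mult)
  also have "\<dots> \<le> cmod (a * d - b * c)"
    by (rule mult_left_le[OF z norm_ge_zero])
  also have "\<dots> = cmod (a * u + b) * cmod (a * z + c)"
    using eqs(1) by (metis norm_minus_cancel norm_mult)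
  finally show "cmod (c * u + d) \<le> cmod (a * u + b)"
    by (rule mult_right_le_imp_le) (use nz in simp)
qed

theorem lemma3p8:
  fixes a b c d :: complex
  assumes "a * d - b * c \<noteq> 0"
    and "moebius_maps_cdisc_into_disc a b c d"
  shows "moebius_maps_cdisc_into_disc a c b d"
  unfolding moebius_maps_cdisc_into_disc_iff
proof (intro allI impI)
  fix z :: complex
  assume z: "cmod z \<le> 1"
  show "cmod (a * z + c) < cmod (b * z + d)"
  proof (rule ccontr)
    assume "\<not> ?thesis"
    then have "cmod (b * z + d) \<le> cmod (a * z + c)"
      by simp
    then obtain u where u: "cmod u \<le> 1" and "cmod (c * u + d) \<le> cmod (a * u + b)"
      by (rule moebius_transpose_failure_transfers[OF assms(1) z])
    moreover have "cmod (a * u + b) < cmod (c * u + d)"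
      using assms(2) u by (simp add: moebius_maps_cdisc_into_disc_iff)
    ultimately show False
      by linarith
  qed
qed

end
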